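(* For every $n\in\mathbb{N}$ and every $0\le \rho\le \tfrac12$, let $d=2^n+1$ and $W=\{x\in\mathbb{R}^d:\|x\|\le 1\}$. Then there exist an instance set $\mathcal{Z}$, a distribution $\mathcal{D}$ over $\mathcal{Z}$, and a loss $f:\mathbb{R}^d\times\mathcal{Z}\to\mathbb{R}$ such that for every $z$, $f(\cdot,z)$ is non-negative, convex, $1$-Lipschitz on $W$, $1$-smooth and $\rho$-flat, with the following property: with probability at least $\tfrac12$ over the i.i.d. training set $S=(z_1,\dots,z_n)\sim\mathcal{D}^n$, there exist $w^{(1)},w^{(2)}\in\arg\min_{w\in W}F_S(w)$ such that (i) for every $r\ge 0$, $w^{(1)}\in\arg\min_{w\in W}F_S^{r}(w)$ (in particular, if $r\le\rho$, $w^{(1)}$ is an $r$-flat minimum of $F_S$); (ii) $w^{(2)}$ is sharp: $F_S^{\delta}(w^{(2)})\ge F_S(w^{(2)})+\tfrac12\delta^2$ for every $\delta>0$; (iii) $F(w^{(1)})-F(w^\star)\ge c$ for a universal constant $c>0$ (e.g. $c=1/16$), while $F(w^{(2)})-F(w^\star)=0$, where $w^\star\in\arg\min_{w\in W}F(w)$.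
   Context: Norms are Euclidean. For a loss $f(w,z)$ and distribution $\mathcal{D}$, the population risk is $F(w)=\mathbb{E}_{z\sim\mathcal{D}}[f(w,z)]$, and for a sample $S=(z_1,\dots,z_n)$ the empirical risk is $F_S(w)=\frac1n\sum_{i=1}^n f(w,z_i)$. The sharpness-aware empirical risk with radius $r\ge0$ is $F_S^{r}(w)=\max_{v:\|v\|\le r}F_S(w+v)$. A function is $\beta$-smooth if its gradient is $\beta$-Lipschitz. For $\rho\ge0$, a point $w^\star$ is a $\rho$-flat minimum of a non-negative function $g:\mathbb{R}^d\to\mathbb{R}$ if $g(w)=0$ for every $w$ with $\|w-w^\star\|\le\rho$; $g$ is called $\rho$-flat if it has a $\rho$-flat minimum. *)

theory Defs
  imports "HOL-Analysis.Analysis" "HOL-Probability.Probability"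
begin

definition emp_risk :: "('a \<Rightarrow> 'z \<Rightarrow> real) \<Rightarrow> nat \<Rightarrow> (nat \<Rightarrow> 'z) \<Rightarrow> 'a \<Rightarrow> real" where
  "emp_risk f n S w = (\<Sum>i<n. f w (S i)) / real n"

definition pop_risk :: "('a \<Rightarrow> 'z \<Rightarrow> real) \<Rightarrow> 'z measure \<Rightarrow> 'a \<Rightarrow> real" where
  "pop_risk f D w = (\<integral>z. f w z \<partial>D)"

definition sa_risk :: "('a::real_normed_vector \<Rightarrow> real) \<Rightarrow> real \<Rightarrow> 'a \<Rightarrow> real" where
  "sa_risk g r w = (SUP v\<in>cball 0 r. g (w + v))"

definition argmin_on :: "'a set \<Rightarrow> ('a \<Rightarrow> real) \<Rightarrow> 'a set" where
  "argmin_on W g = {w \<in> W. \<forall>v\<in>W. g w \<le> g v}"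

definition smooth_fun :: "real \<Rightarrow> ('a::real_inner \<Rightarrow> real) \<Rightarrow> bool" where
  "smooth_fun \<beta> g \<longleftrightarrow> (\<exists>G. (\<forall>x. (g has_derivative (\<lambda>h. G x \<bullet> h)) (at x)) \<and>
      (\<forall>x y. norm (G x - G y) \<le> \<beta> * norm (x - y)))"

definition flat_min :: "('a::real_normed_vector \<Rightarrow> real) \<Rightarrow> real \<Rightarrow> 'a \<Rightarrow> bool" where
  "flat_min g \<rho> w0 \<longleftrightarrow> (\<forall>w. norm (w - w0) \<le> \<rho> \<longrightarrow> g w = 0)"

definition flat_fun :: "('a::real_normed_vector \<Rightarrow> real) \<Rightarrow> real \<Rightarrow> bool" where
  "flat_fun g \<rho> \<longleftrightarrow> (\<exists>w0. flat_min g \<rho> w0)"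

end

theory Submission
  imports Defs
begin

text \<open>
  Let \<open>N = 2^n\<close> and let an instance \<open>z \<subseteq> {0..<N}\<close> activate the basis directions \<open>e N\<close> and
  \<open>e j\<close> for \<open>j \<in> z\<close>; its loss sums the convex, 1-smooth dead-zone quadratic
  \<open>(max 0 (\<bar>w \<bullet> b\<bar> - \<rho>))\<^sup>2 / 2\<close> over the active directions \<open>b\<close>. For \<open>n\<close> uniform samples,
  with probability \<open>1 - (1 - 1/N)^N \<ge> 1/2\<close> some direction \<open>e j\<close> is active in no sample.
  The empirical risk is then invariant under translations along \<open>e j\<close>, so \<open>e j\<close> is a flat
  empirical minimiser and, the empirical risk being convex and even, it also minimises every
  sharpness-aware risk; yet half of the population activates \<open>e j\<close>, so its population risk is
  \<open>(1 - \<rho>)\<^sup>2 / 4 \<ge> 1/16\<close>. The direction \<open>e N\<close> is active in every sample, which makes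
  \<open>\<rho> e N\<close> a sharp empirical minimiser of population risk zero.
\<close>

lemma has_real_derivative_quadratic_remainder:
  fixes g :: "real \<Rightarrow> real"
  assumes "\<And>y. \<bar>g y - g x - D * (y - x)\<bar> \<le> C * (y - x)\<^sup>2"
  shows "(g has_real_derivative D) (at x)"
proof -
  have "((\<lambda>y. (g y - g x) / (y - x)) \<longlongrightarrow> D) (at x)"
  proof (rule metric_tendsto_imp_tendsto)
    show "((\<lambda>y. C * (y - x)) \<longlongrightarrow> 0) (at x)"
      by (intro tendsto_eq_intros) auto
    show "\<forall>\<^sub>F y in at x. dist ((g y - g x) / (y - x)) D \<le> dist (C * (y - x)) 0"
      unfolding eventually_at_filter
    proof (intro always_eventually allI impI)
      fix y assume "y \<noteq> x"
      then have "dist ((g y - g x) / (y - x)) D = \<bar>g y - g x - D * (y - x)\<bar> / \<bar>y - x\<bar>"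
        by (simp add: dist_real_def abs_divide[symmetric] diff_divide_distrib)
      also have "\<dots> \<le> C * (y - x)\<^sup>2 / \<bar>y - x\<bar>"
        by (rule divide_right_mono[OF assms abs_ge_zero])
      also have "\<dots> = C * \<bar>y - x\<bar>"
        using \<open>y \<noteq> x\<close> by (simp add: power2_eq_square divide_simps)
      also have "\<dots> \<le> dist (C * (y - x)) 0"
        by (simp add: abs_mult mult_right_mono)
      finally show "dist ((g y - g x) / (y - x)) D \<le> dist (C * (y - x)) 0" .
    qed
  qed
  then show ?thesis
    by (simp add: has_field_derivative_iff)
qed

definition half_sq_pos :: "real \<Rightarrow> real" where
  "half_sq_pos s = (max 0 s)\<^sup>2 / 2"

lemma half_sq_pos_remainder:
  "\<bar>half_sq_pos y - half_sq_pos x - max 0 x * (y - x)\<bar> \<le> (y - x)\<^sup>2"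
proof -
  have mixed: "x * y \<le> 0" if "(0 \<le> x) \<noteq> (0 \<le> y)"
    using that by (auto intro: mult_nonneg_nonpos mult_nonpos_nonneg)
  have sq: "0 \<le> x * x" "0 \<le> y * y" "2 * (x * y) \<le> x * x + y * y"
    using sum_squares_bound[of x y] by (simp_all add: power2_eq_square)
  show ?thesis
    unfolding half_sq_pos_def max_def power2_eq_square
    using mixed sq by (auto simp: abs_le_iff algebra_simps) (use sq in linarith)+
qed

lemma has_real_derivative_half_sq_pos: "(half_sq_pos has_real_derivative max 0 s) (at s)"
  by (rule has_real_derivative_quadratic_remainder[where C = 1]) (simp add: half_sq_pos_remainder)

definition deadzone_sq :: "real \<Rightarrow> real \<Rightarrow> real" where
  "deadzone_sq r t = half_sq_pos (t - r) + half_sq_pos (- t - r)"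

definition deadzone_sq_deriv :: "real \<Rightarrow> real \<Rightarrow> real" where
  "deadzone_sq_deriv r t = max 0 (t - r) - max 0 (- t - r)"

lemma has_real_derivative_deadzone_sq:
  "(deadzone_sq r has_real_derivative deadzone_sq_deriv r t) (at t)"
proof -
  have right: "((\<lambda>t. half_sq_pos (t - r)) has_real_derivative max 0 (t - r) * 1) (at t)"
    by (rule DERIV_chain2[OF has_real_derivative_half_sq_pos]) (auto intro!: derivative_eq_intros)
  have left: "((\<lambda>t. half_sq_pos (- t - r)) has_real_derivative max 0 (- t - r) * (- 1)) (at t)"
    by (rule DERIV_chain2[OF has_real_derivative_half_sq_pos]) (auto intro!: derivative_eq_intros)
  show ?thesis
    using DERIV_add[OF right left] unfolding deadzone_sq_def[abs_def] deadzone_sq_deriv_def by simp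
qed

lemma deadzone_sq_nonneg: "0 \<le> deadzone_sq r t"
  by (simp add: deadzone_sq_def half_sq_pos_def)

lemma deadzone_sq_eq_0: "\<bar>t\<bar> \<le> r \<Longrightarrow> deadzone_sq r t = 0"
  by (simp add: deadzone_sq_def half_sq_pos_def)

lemma deadzone_sq_minus: "deadzone_sq r (- t) = deadzone_sq r t"
  by (simp add: deadzone_sq_def)

lemma deadzone_sq_beyond: "0 \<le> r \<Longrightarrow> 0 \<le> d \<Longrightarrow> deadzone_sq r (r + d) = d\<^sup>2 / 2"
  by (simp add: deadzone_sq_def half_sq_pos_def)

lemma abs_deadzone_sq_deriv_le: "0 \<le> r \<Longrightarrow> \<bar>deadzone_sq_deriv r t\<bar> \<le> \<bar>t\<bar>"
  by (simp add: deadzone_sq_deriv_def max_def)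

lemma deadzone_sq_deriv_lipschitz:
  "0 \<le> r \<Longrightarrow> \<bar>deadzone_sq_deriv r s - deadzone_sq_deriv r t\<bar> \<le> \<bar>s - t\<bar>"
  by (simp add: deadzone_sq_deriv_def max_def)

lemma deadzone_sq_deriv_mono: "0 \<le> r \<Longrightarrow> s \<le> t \<Longrightarrow> deadzone_sq_deriv r s \<le> deadzone_sq_deriv r t"
  by (simp add: deadzone_sq_deriv_def max_def)

lemma convex_on_deadzone_sq: "0 \<le> r \<Longrightarrow> convex_on UNIV (deadzone_sq r)"
  by (rule convex_on_realI[where f'="deadzone_sq_deriv r"])
    (auto intro: has_real_derivative_deadzone_sq deadzone_sq_deriv_mono)

lemma convex_on_sum_fun:
  assumes "finite I" "convex S" "\<And>i. i \<in> I \<Longrightarrow> convex_on S (f i)"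
  shows "convex_on S (\<lambda>x. \<Sum>i\<in>I. f i x)"
  using assms by (induction I rule: finite_induct) (auto simp: convex_on_const)

lemma convex_on_compose_linear:
  assumes "linear h" "convex_on UNIV g"
  shows "convex_on UNIV (\<lambda>x. g (h x))"
  using assms(2) by (auto simp: convex_on_def linear_add[OF assms(1)] linear_scale[OF assms(1)])

lemma inner_sum_scaleR_Basis:
  assumes "K \<subseteq> Basis" "b \<in> Basis"
  shows "(\<Sum>k\<in>K. c k *\<^sub>R k) \<bullet> b = (if b \<in> K then c b else 0)"
proof -
  have "finite K"
    using assms(1) finite_Basis finite_subset by blast
  moreover have "(c k *\<^sub>R k) \<bullet> b = (if k = b then c b else 0)" if "k \<in> K" for k
    using that assms by (auto simp: inner_Basis)
  ultimately show ?thesis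
    by (simp add: inner_sum_left)
qed

definition basis_loss :: "real \<Rightarrow> 'a::euclidean_space set \<Rightarrow> 'a \<Rightarrow> real" where
  "basis_loss r K w = (\<Sum>b\<in>K. deadzone_sq r (w \<bullet> b))"

definition basis_loss_grad :: "real \<Rightarrow> 'a::euclidean_space set \<Rightarrow> 'a \<Rightarrow> 'a" where
  "basis_loss_grad r K w = (\<Sum>b\<in>K. deadzone_sq_deriv r (w \<bullet> b) *\<^sub>R b)"

lemma basis_loss_has_derivative:
  "(basis_loss r K has_derivative (\<lambda>h. basis_loss_grad r K w \<bullet> h)) (at w)"
proof -
  have "((\<lambda>w. deadzone_sq r (w \<bullet> b)) has_derivative
      (\<lambda>h. deadzone_sq_deriv r (w \<bullet> b) * (h \<bullet> b))) (at w)"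
    for b :: 'a
    using has_derivative_compose[OF bounded_linear_imp_has_derivative[OF bounded_linear_inner_left]
        has_real_derivative_deadzone_sq[of r "w \<bullet> b", unfolded has_field_derivative_def]]
    by simp
  then have "(basis_loss r K has_derivative
      (\<lambda>h. \<Sum>b\<in>K. deadzone_sq_deriv r (w \<bullet> b) * (h \<bullet> b))) (at w)"
    unfolding basis_loss_def[abs_def] by (rule has_derivative_sum)
  then show ?thesis
    by (simp add: basis_loss_grad_def inner_sum_right inner_commute)
qed

lemma norm_basis_loss_grad_le:
  assumes "K \<subseteq> Basis" "0 \<le> r"
  shows "norm (basis_loss_grad r K w) \<le> norm w"
  using assms abs_deadzone_sq_deriv_le[OF assms(2)]
  by (intro norm_le_componentwise) (simp add: basis_loss_grad_def inner_sum_scaleR_Basis)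

lemma basis_loss_grad_lipschitz:
  assumes "K \<subseteq> Basis" "0 \<le> r"
  shows "norm (basis_loss_grad r K x - basis_loss_grad r K y) \<le> norm (x - y)"
  using assms deadzone_sq_deriv_lipschitz[OF assms(2)]
  by (intro norm_le_componentwise)
    (simp add: basis_loss_grad_def inner_sum_scaleR_Basis inner_diff_left)

lemma smooth_fun_basis_loss:
  assumes "K \<subseteq> Basis" "0 \<le> r"
  shows "smooth_fun 1 (basis_loss r K)"
  unfolding smooth_fun_def
  using basis_loss_has_derivative basis_loss_grad_lipschitz[OF assms] by auto

lemma lipschitz_on_basis_loss:
  assumes "K \<subseteq> Basis" "0 \<le> r" "0 \<le> R"
  shows "R-lipschitz_on (cball 0 R) (basis_loss r K)"
proof (rule lipschitz_onI)
  fix x y :: 'a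
  assume "x \<in> cball 0 R" "y \<in> cball 0 R"
  then have "norm (basis_loss r K x - basis_loss r K y) \<le> R * norm (x - y)"
  proof (intro differentiable_bound[where f' = "\<lambda>w h. basis_loss_grad r K w \<bullet> h"])
    show "(basis_loss r K has_derivative (\<lambda>h. basis_loss_grad r K w \<bullet> h)) (at w within cball 0 R)" for w
      using basis_loss_has_derivative has_derivative_at_withinI by blast
    show "onorm (\<lambda>h. basis_loss_grad r K w \<bullet> h) \<le> R" if "w \<in> cball 0 R" for w
    proof (rule onorm_le)
      fix h
      have "norm (basis_loss_grad r K w \<bullet> h) \<le> norm (basis_loss_grad r K w) * norm h"
        by (simp add: Cauchy_Schwarz_ineq2)
      also have "\<dots> \<le> R * norm h"
        using norm_basis_loss_grad_le[OF assms(1,2), of w] that by (intro mult_right_mono) auto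
      finally show "norm (basis_loss_grad r K w \<bullet> h) \<le> R * norm h" .
    qed
  qed auto
  then show "dist (basis_loss r K x) (basis_loss r K y) \<le> R * dist x y"
    by (simp add: dist_norm)
qed (rule assms(3))

lemma convex_on_basis_loss:
  assumes "K \<subseteq> Basis" "0 \<le> r"
  shows "convex_on UNIV (basis_loss r K)"
  unfolding basis_loss_def[abs_def]
  using assms finite_subset[OF assms(1)]
  by (intro convex_on_sum_fun convex_on_deadzone_sq
      convex_on_compose_linear[OF bounded_linear.linear[OF bounded_linear_inner_left]]) auto

lemma basis_loss_nonneg: "0 \<le> basis_loss r K w"
  by (simp add: basis_loss_def sum_nonneg deadzone_sq_nonneg)

lemma basis_loss_eq_0:
  assumes "K \<subseteq> Basis" "norm w \<le> r"
  shows "basis_loss r K w = 0"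
  using assms norm_bound_Basis_le by (auto simp: basis_loss_def intro!: sum.neutral deadzone_sq_eq_0)

lemma flat_fun_basis_loss: "K \<subseteq> Basis \<Longrightarrow> flat_fun (basis_loss r K) r"
  unfolding flat_fun_def flat_min_def
  by (rule exI[of _ 0]) (simp add: basis_loss_eq_0)

lemma basis_loss_minus: "basis_loss r K (- w) = basis_loss r K w"
  by (simp add: basis_loss_def deadzone_sq_minus[of r "w \<bullet> _", symmetric])

lemma basis_loss_translate:
  assumes "K \<subseteq> Basis" "b \<in> Basis" "b \<notin> K"
  shows "basis_loss r K (w + c *\<^sub>R b) = basis_loss r K w"
proof -
  have "b \<bullet> k = 0" if "k \<in> K" for k
    using that assms by (metis inner_not_same_Basis subsetD)
  then show ?thesis
    by (simp add: basis_loss_def inner_add_left)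
qed

lemma basis_loss_line:
  assumes "K \<subseteq> Basis" "b \<in> K" "0 \<le> r"
  shows "basis_loss r K (t *\<^sub>R b) = deadzone_sq r t"
proof -
  have "deadzone_sq r (t *\<^sub>R b \<bullet> k) = (if k = b then deadzone_sq r t else 0)" if "k \<in> K" for k
    using that assms by (auto simp: inner_Basis subsetD deadzone_sq_eq_0)
  then show ?thesis
    using assms finite_subset[OF assms(1)] by (simp add: basis_loss_def)
qed

lemma convex_on_emp_risk:
  assumes "\<And>i. i < n \<Longrightarrow> convex_on UNIV (\<lambda>w. f w (S i))"
  shows "convex_on UNIV (emp_risk f n S)"
  unfolding emp_risk_def[abs_def] using assms by (intro convex_on_cdiv convex_on_sum_fun) auto

lemma bdd_above_translate_cball:
  fixes g :: "'a::{real_normed_vector, heine_borel} \<Rightarrow> real"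
  assumes "continuous_on UNIV g"
  shows "bdd_above ((\<lambda>v. g (w + v)) ` cball 0 r)"
proof -
  have "continuous_on (cball 0 r) (\<lambda>v. g (w + v))"
    by (rule continuous_on_compose2[OF assms]) (auto intro: continuous_intros)
  then show ?thesis
    by (intro bounded_imp_bdd_above compact_imp_bounded compact_continuous_image) auto
qed

lemma sa_risk_ge:
  fixes g :: "'a::{real_normed_vector, heine_borel} \<Rightarrow> real"
  assumes "continuous_on UNIV g" "norm v \<le> r"
  shows "g (w + v) \<le> sa_risk g r w"
  unfolding sa_risk_def using assms by (intro cSUP_upper bdd_above_translate_cball) auto

lemma sa_risk_at_period_le:
  fixes g :: "'a::euclidean_space \<Rightarrow> real"
  assumes convex: "convex_on UNIV g" and even: "\<And>v. g (- v) = g v"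
    and period: "\<And>v. g (p + v) = g v" and "0 \<le> r"
  shows "sa_risk g r p \<le> sa_risk g r w"
  unfolding sa_risk_def
proof (rule cSUP_least)
  show "cball 0 r \<noteq> {}"
    using \<open>0 \<le> r\<close> by simp
  have cont: "continuous_on UNIV g"
    using convex_on_continuous[OF open_UNIV convex] .
  fix v :: 'a
  assume v: "v \<in> cball 0 r"
  have midpoint: "(1 - 1/2) *\<^sub>R (w + v) + (1/2) *\<^sub>R (- (w - v)) = v"
    by (simp add: algebra_simps flip: scaleR_add_left)
  have "g v \<le> (1 - 1/2) * g (w + v) + (1/2) * g (- (w - v))"
    using convex_onD[OF convex, of "1/2" "w + v" "- (w - v)"] unfolding midpoint by simp
  then have "g (p + v) \<le> (g (w + v) + g (w + (- v))) / 2"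
    using even[of "w - v"] by (simp add: period)
  also have "\<dots> \<le> (SUP v\<in>cball 0 r. g (w + v))"
    using v sa_risk_ge[OF cont, of v r w] sa_risk_ge[OF cont, of "- v" r w] by (simp add: sa_risk_def)
  finally show "g (p + v) \<le> (SUP v\<in>cball 0 r. g (w + v))" .
qed

lemma PiM_uniform_count_measure:
  assumes "finite B" "B \<noteq> {}" "finite I" "A \<subseteq> PiE I (\<lambda>_. B)"
  shows "A \<in> sets (PiM I (\<lambda>_. uniform_count_measure B))"
    and "measure (PiM I (\<lambda>_. uniform_count_measure B)) A = card A / card B ^ card I"
proof -
  let ?M = "PiM I (\<lambda>_. uniform_count_measure B)"
  have product: "product_sigma_finite (\<lambda>_::'i. uniform_count_measure B)"
    using assms by (simp add: product_sigma_finite_def prob_space_imp_sigma_finite prob_space_uniform_count_measure)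
  have singleton: "{x} = PiE I (\<lambda>i. {x i})" if "x \<in> PiE I (\<lambda>_. B)" for x
    using that by (simp add: PiE_singleton PiE_iff)
  have sets_singleton: "{x} \<in> sets ?M" if "x \<in> PiE I (\<lambda>_. B)" for x
    unfolding singleton[OF that] using that assms
    by (intro sets_PiM_I_finite) (auto simp: sets_uniform_count_measure PiE_iff)
  have emeasure_singleton: "emeasure ?M {x} = ennreal ((1 / card B) ^ card I)"
    if "x \<in> PiE I (\<lambda>_. B)" for x
  proof -
    have "emeasure ?M {x} = (\<Prod>i\<in>I. emeasure (uniform_count_measure B) {x i})"
      unfolding singleton[OF that] using that assms
      by (intro product_sigma_finite.emeasure_PiM[OF product]) (auto simp: sets_uniform_count_measure PiE_iff)
    also have "\<dots> = (\<Prod>i\<in>I. ennreal (1 / card B))"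
      using that assms by (intro prod.cong refl) (auto simp: emeasure_uniform_count_measure PiE_iff)
    finally show ?thesis
      by (simp add: ennreal_power)
  qed
  have "finite A"
    using assms by (blast intro: finite_subset finite_PiE)
  show "A \<in> sets ?M"
    using \<open>finite A\<close> sets_singleton assms(4) sets.finite_UN[of A "\<lambda>x. {x}" ?M] by auto
  have "measure ?M A = (\<Sum>x\<in>A. measure ?M {x})"
    using \<open>finite A\<close> sets_singleton emeasure_singleton assms(4)
    by (intro measure_eq_sum_singleton) auto
  also have "\<dots> = (\<Sum>x\<in>A. (1 / card B) ^ card I)"
    using emeasure_singleton assms(4) by (intro sum.cong refl) (auto simp: measure_def)
  finally show "measure ?M A = card A / card B ^ card I"
    by (simp add: power_divide)
qed

lemma card_covering_subset_tuples:
  "card {S \<in> PiE {..<n} (\<lambda>_. Pow {..<N}). \<forall>j<N. \<exists>i<n. j \<in> S i} = (2 ^ n - 1) ^ N"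
proof -
  let ?C = "{S \<in> PiE {..<n} (\<lambda>_. Pow {..<N}). \<forall>j<N. \<exists>i<n. j \<in> S i}"
  let ?Y = "PiE {..<N} (\<lambda>_. Pow {..<n} - {{}})"
  define transpose where "transpose S = (\<lambda>j\<in>{..<N}. {i\<in>{..<n}. j \<in> S i})" for S :: "nat \<Rightarrow> nat set"
  define transpose' where "transpose' Y = (\<lambda>i\<in>{..<n}. {j\<in>{..<N}. i \<in> Y j})" for Y :: "nat \<Rightarrow> nat set"
  have "bij_betw transpose ?C ?Y"
  proof (rule bij_betw_byWitness[where f'=transpose'])
    show "\<forall>S\<in>?C. transpose' (transpose S) = S" "\<forall>Y\<in>?Y. transpose (transpose' Y) = Y"
      by (auto simp: transpose_def transpose'_def PiE_iff extensional_def fun_eq_iff)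
    show "transpose ` ?C \<subseteq> ?Y"
      by (auto simp: transpose_def PiE_iff)
    show "transpose' ` ?Y \<subseteq> ?C"
      by (auto simp: transpose'_def PiE_iff) blast
  qed
  then have "card ?C = card ?Y"
    by (rule bij_betw_same_card)
  then show ?thesis
    by (simp add: card_PiE card_Pow)
qed

lemma one_minus_inverse_power_le_half:
  assumes "1 \<le> N"
  shows "(1 - 1 / real N) ^ N \<le> 1 / 2"
proof -
  have "(1 - 1 / real N) ^ N \<le> exp (- 1 / real N) ^ N"
    using assms exp_ge_add_one_self[of "- 1 / real N"] by (intro power_mono) auto
  also have "\<dots> = exp (- 1)"
    using assms by (simp flip: exp_of_nat_mult)
  also have "\<dots> \<le> 1 / 2"
    using exp_ge_add_one_self[of 1] by (simp add: exp_minus field_simps)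
  finally show ?thesis .
qed

lemma prob_uncovered_element:
  "measure (PiM {..<n} (\<lambda>_. uniform_count_measure (Pow {..<N})))
     {S \<in> PiE {..<n} (\<lambda>_. Pow {..<N}). \<exists>j<N. \<forall>i<n. j \<notin> S i}
   = 1 - (1 - 1 / 2 ^ n) ^ N"
proof -
  let ?O = "PiE {..<n} (\<lambda>_. Pow {..<N})"
  let ?U = "{S \<in> ?O. \<exists>j<N. \<forall>i<n. j \<notin> S i}"
  let ?C = "{S \<in> ?O. \<forall>j<N. \<exists>i<n. j \<in> S i}"
  have card_O: "card ?O = (2 ^ n) ^ N"
    by (simp add: card_PiE card_Pow flip: power_mult)
  have "finite ?O"
    by (intro finite_PiE) auto
  then have "card (?U \<union> ?C) = card ?U + card ?C"
    by (intro card_Un_disjoint) auto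
  moreover have "?U \<union> ?C = ?O"
    by blast
  ultimately have "card ?O = card ?U + card ?C"
    by simp
  then have "real (card ?U) = real (card ?O) - real (card ?C)"
    by simp
  also have "\<dots> = (2 ^ n) ^ N - (2 ^ n - 1) ^ N"
    unfolding card_O card_covering_subset_tuples by (simp add: of_nat_diff)
  finally have "real (card ?U) = (2 ^ n) ^ N - (2 ^ n - 1) ^ N" .
  moreover have "measure (PiM {..<n} (\<lambda>_. uniform_count_measure (Pow {..<N}))) ?U
      = card ?U / (2 ^ n) ^ N"
    by (subst PiM_uniform_count_measure(2)) (auto simp: card_Pow simp flip: power_mult)
  moreover have "((2::real) ^ n - 1) ^ N / (2 ^ n) ^ N = (1 - 1 / 2 ^ n) ^ N"
    by (simp add: diff_divide_distrib flip: power_divide)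
  ultimately show ?thesis
    by (simp add: diff_divide_distrib)
qed

lemma card_Pow_containing:
  assumes "finite A" "j \<in> A"
  shows "card {z \<in> Pow A. j \<in> z} = 2 ^ (card A - 1)"
proof -
  have "bij_betw (\<lambda>z. z - {j}) {z \<in> Pow A. j \<in> z} (Pow (A - {j}))"
    by (rule bij_betw_byWitness[where f' = "insert j"]) (use assms in auto)
  then show ?thesis
    using assms by (simp add: bij_betw_same_card card_Pow)
qed

locale sharp_flat_instance =
  fixes n :: nat and \<rho> :: real and e :: "nat \<Rightarrow> 'a::euclidean_space"
  assumes n_ge_1: "1 \<le> n" and rho_nonneg: "0 \<le> \<rho>" and rho_le_half: "\<rho> \<le> 1/2"
    and bij_e: "bij_betw e {..2 ^ n} Basis"
begin

abbreviation N :: nat where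
  "N \<equiv> 2 ^ n"

definition active :: "nat set \<Rightarrow> 'a set" where
  "active z = e ` insert N (z \<inter> {..<N})"

definition loss :: "'a \<Rightarrow> nat set \<Rightarrow> real" where
  "loss w z = basis_loss \<rho> (active z) w"

definition distr :: "nat set measure" where
  "distr = uniform_count_measure (Pow {..<N})"

lemma e_in_Basis: "k \<le> N \<Longrightarrow> e k \<in> Basis"
  using bij_e by (auto simp: bij_betw_def)

lemma active_subset_Basis: "active z \<subseteq> Basis"
  unfolding active_def using e_in_Basis by auto

lemma e_N_active: "e N \<in> active z"
  by (simp add: active_def)

lemma e_active_iff:
  assumes "j < N"
  shows "e j \<in> active z \<longleftrightarrow> j \<in> z"
proof
  assume "e j \<in> active z"
  then obtain k where k: "k \<in> insert N (z \<inter> {..<N})" "e j = e k"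
    unfolding active_def by auto
  with assms bij_e have "j = k"
    by (auto simp: bij_betw_def dest: inj_onD)
  with k assms show "j \<in> z"
    by auto
qed (use assms in \<open>simp add: active_def\<close>)

lemma prob_space_distr: "prob_space distr"
  unfolding distr_def by (rule prob_space_uniform_count_measure) auto

lemma integrable_loss: "integrable distr (loss w)"
  unfolding distr_def uniform_count_measure_def by (auto intro: integrable_point_measure_finite)

lemma space_samples: "space (PiM {..<n} (\<lambda>_. distr)) = PiE {..<n} (\<lambda>_. Pow {..<N})"
  by (simp add: space_PiM distr_def space_uniform_count_measure)

lemma sets_samples:
  assumes "A \<subseteq> space (PiM {..<n} (\<lambda>_. distr))"
  shows "A \<in> sets (PiM {..<n} (\<lambda>_. distr))"
  using assms unfolding space_samples unfolding distr_def
  by (intro PiM_uniform_count_measure(1)) auto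

lemma loss_regular:
  "(\<forall>w. loss w z \<ge> 0) \<and> convex_on UNIV (\<lambda>w. loss w z) \<and>
    1-lipschitz_on (cball 0 1) (\<lambda>w. loss w z) \<and>
    smooth_fun 1 (\<lambda>w. loss w z) \<and> flat_fun (\<lambda>w. loss w z) \<rho>"
  using active_subset_Basis rho_nonneg
  by (simp add: loss_def basis_loss_nonneg convex_on_basis_loss lipschitz_on_basis_loss
      smooth_fun_basis_loss flat_fun_basis_loss)

lemma loss_eq_0: "norm w \<le> \<rho> \<Longrightarrow> loss w z = 0"
  unfolding loss_def by (rule basis_loss_eq_0[OF active_subset_Basis])

lemma pop_risk_loss: "pop_risk loss distr w = (\<Sum>z\<in>Pow {..<N}. loss w z) / 2 ^ N"
  by (simp add: pop_risk_def distr_def integral_uniform_count_measure card_Pow)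

lemma pop_risk_loss_eq_0: "norm w \<le> \<rho> \<Longrightarrow> pop_risk loss distr w = 0"
  by (simp add: pop_risk_loss loss_eq_0)

lemma pop_risk_loss_nonneg: "0 \<le> pop_risk loss distr w"
  by (simp add: pop_risk_loss loss_def basis_loss_nonneg sum_nonneg)

lemma zero_in_argmin_pop_risk: "0 \<in> argmin_on (cball 0 1) (pop_risk loss distr)"
  by (simp add: argmin_on_def pop_risk_loss_eq_0 pop_risk_loss_nonneg rho_nonneg)

lemma pop_risk_loss_e:
  assumes "j < N"
  shows "pop_risk loss distr (e j) = deadzone_sq \<rho> 1 / 2"
proof -
  have "loss (e j) z = (if j \<in> z then deadzone_sq \<rho> 1 else 0)" for z
  proof (cases "j \<in> z")
    case True
    then show ?thesis
      using assms basis_loss_line[OF active_subset_Basis _ rho_nonneg, of "e j" z 1]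
      by (simp add: loss_def e_active_iff)
  next
    case False
    then have "loss (e j) z = loss (0 + 1 *\<^sub>R e j) z"
      by simp
    also have "\<dots> = loss 0 z"
      unfolding loss_def using False assms
      by (intro basis_loss_translate active_subset_Basis e_in_Basis) (auto simp: e_active_iff)
    finally show ?thesis
      using False rho_nonneg by (simp add: loss_eq_0)
  qed
  then have "pop_risk loss distr (e j) = deadzone_sq \<rho> 1 * card {z \<in> Pow {..<N}. j \<in> z} / 2 ^ N"
    by (simp add: pop_risk_loss sum.If_cases Int_def conj_commute)
  also have "card {z \<in> Pow {..<N}. j \<in> z} = 2 ^ (N - 1)"
    using assms card_Pow_containing[of "{..<N}" j] by simp
  also have "(2::real) ^ N = 2 * 2 ^ (N - 1)"
    by (simp flip: power_Suc)
  finally show ?thesis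
    by simp
qed

lemma pop_risk_loss_e_ge:
  assumes "j < N"
  shows "1/16 \<le> pop_risk loss distr (e j)"
proof -
  have "deadzone_sq \<rho> 1 = (1 - \<rho>)\<^sup>2 / 2"
    using deadzone_sq_beyond[of \<rho> "1 - \<rho>"] rho_nonneg rho_le_half by simp
  moreover have "(1/2)\<^sup>2 \<le> (1 - \<rho>)\<^sup>2"
    using rho_nonneg rho_le_half by (intro power_mono) auto
  ultimately show ?thesis
    using assms by (simp add: pop_risk_loss_e power2_eq_square)
qed

lemma emp_risk_loss_nonneg: "0 \<le> emp_risk loss n S w"
  by (simp add: emp_risk_def loss_def basis_loss_nonneg sum_nonneg)

lemma emp_risk_loss_eq_0: "norm w \<le> \<rho> \<Longrightarrow> emp_risk loss n S w = 0"
  by (simp add: emp_risk_def loss_eq_0)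

lemma emp_risk_loss_minus: "emp_risk loss n S (- w) = emp_risk loss n S w"
  by (simp add: emp_risk_def loss_def basis_loss_minus)

lemma convex_on_emp_risk_loss: "convex_on UNIV (emp_risk loss n S)"
  unfolding loss_def
  by (intro convex_on_emp_risk convex_on_basis_loss active_subset_Basis rho_nonneg)

lemma emp_risk_loss_line: "emp_risk loss n S (t *\<^sub>R e N) = deadzone_sq \<rho> t"
  using n_ge_1 by (simp add: emp_risk_def loss_def basis_loss_line active_subset_Basis e_N_active rho_nonneg)

lemma emp_risk_loss_translate:
  assumes "j < N" "\<And>i. i < n \<Longrightarrow> j \<notin> S i"
  shows "emp_risk loss n S (w + c *\<^sub>R e j) = emp_risk loss n S w"
  using assms
  by (simp add: emp_risk_def loss_def basis_loss_translate active_subset_Basis e_in_Basis e_active_iff)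

lemma flat_minimizer:
  assumes "j < N" "\<And>i. i < n \<Longrightarrow> j \<notin> S i"
  shows "e j \<in> argmin_on (cball 0 1) (emp_risk loss n S)"
    and "0 \<le> r \<Longrightarrow> e j \<in> argmin_on (cball 0 1) (sa_risk (emp_risk loss n S) r)"
    and "r \<le> \<rho> \<Longrightarrow> flat_min (emp_risk loss n S) r (e j)"
proof -
  note translate = emp_risk_loss_translate[OF assms]
  have norm_e: "norm (e j) = 1"
    using assms(1) e_in_Basis by simp
  have "emp_risk loss n S (e j) = 0"
    using translate[where w = 0 and c = 1] rho_nonneg by (simp add: emp_risk_loss_eq_0)
  then show "e j \<in> argmin_on (cball 0 1) (emp_risk loss n S)"
    by (simp add: argmin_on_def norm_e emp_risk_loss_nonneg)
  show "e j \<in> argmin_on (cball 0 1) (sa_risk (emp_risk loss n S) r)" if "0 \<le> r"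
    using that translate[where c = 1]
    by (auto simp: argmin_on_def norm_e add.commute emp_risk_loss_minus
        intro!: sa_risk_at_period_le convex_on_emp_risk_loss)
  show "flat_min (emp_risk loss n S) r (e j)" if "r \<le> \<rho>"
    unfolding flat_min_def
  proof (intro allI impI)
    fix w
    assume "norm (w - e j) \<le> r"
    then have "emp_risk loss n S ((w - e j) + 1 *\<^sub>R e j) = 0"
      using that by (simp only: translate emp_risk_loss_eq_0)
    then show "emp_risk loss n S w = 0"
      by simp
  qed
qed

lemma sharp_minimizer:
  shows "\<rho> *\<^sub>R e N \<in> argmin_on (cball 0 1) (emp_risk loss n S)"
    and "0 < \<delta> \<Longrightarrow>
      emp_risk loss n S (\<rho> *\<^sub>R e N) + \<delta>\<^sup>2 / 2 \<le> sa_risk (emp_risk loss n S) \<delta> (\<rho> *\<^sub>R e N)"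
proof -
  have norm_e: "norm (e N) = 1"
    using e_in_Basis[of N] by simp
  then have zero: "emp_risk loss n S (\<rho> *\<^sub>R e N) = 0"
    using rho_nonneg by (simp add: emp_risk_loss_eq_0)
  then show "\<rho> *\<^sub>R e N \<in> argmin_on (cball 0 1) (emp_risk loss n S)"
    using rho_nonneg rho_le_half by (simp add: argmin_on_def norm_e emp_risk_loss_nonneg)
  assume "0 < \<delta>"
  have "\<delta>\<^sup>2 / 2 = emp_risk loss n S (\<rho> *\<^sub>R e N + \<delta> *\<^sub>R e N)"
    using \<open>0 < \<delta>\<close> rho_nonneg
    by (simp add: emp_risk_loss_line deadzone_sq_beyond flip: scaleR_add_left)
  also have "\<dots> \<le> sa_risk (emp_risk loss n S) \<delta> (\<rho> *\<^sub>R e N)"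
    using \<open>0 < \<delta>\<close> e_in_Basis[of N]
    by (intro sa_risk_ge convex_on_continuous[OF open_UNIV convex_on_emp_risk_loss]) simp
  finally show
    "emp_risk loss n S (\<rho> *\<^sub>R e N) + \<delta>\<^sup>2 / 2 \<le> sa_risk (emp_risk loss n S) \<delta> (\<rho> *\<^sub>R e N)"
    by (simp add: zero)
qed

lemma prob_good_samples:
  "measure (PiM {..<n} (\<lambda>_. distr))
      {S \<in> space (PiM {..<n} (\<lambda>_. distr)).
        \<exists>w1 w2. w1 \<in> argmin_on (cball 0 1) (emp_risk loss n S) \<and>
                w2 \<in> argmin_on (cball 0 1) (emp_risk loss n S) \<and>
                (\<forall>r\<ge>0. w1 \<in> argmin_on (cball 0 1) (sa_risk (emp_risk loss n S) r)) \<and>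
                (\<forall>r. 0 \<le> r \<and> r \<le> \<rho> \<longrightarrow> flat_min (emp_risk loss n S) r w1) \<and>
                (\<forall>\<delta>>0. sa_risk (emp_risk loss n S) \<delta> w2 \<ge> emp_risk loss n S w2 + \<delta>\<^sup>2 / 2) \<and>
                pop_risk loss distr w1 - pop_risk loss distr 0 \<ge> 1/16 \<and>
                pop_risk loss distr w2 - pop_risk loss distr 0 = 0}
    \<ge> 1/2" (is "measure ?P ?Good \<ge> _")
proof -
  let ?Uncovered = "{S \<in> PiE {..<n} (\<lambda>_. Pow {..<N}). \<exists>j<N. \<forall>i<n. j \<notin> S i}"
  have "?Uncovered \<subseteq> ?Good"
  proof
    fix S
    assume "S \<in> ?Uncovered"
    then obtain j where S: "S \<in> space ?P" and j: "j < N" "\<And>i. i < n \<Longrightarrow> j \<notin> S i"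
      unfolding space_samples by blast
    have "e j \<in> argmin_on (cball 0 1) (emp_risk loss n S)"
      "\<forall>r\<ge>0. e j \<in> argmin_on (cball 0 1) (sa_risk (emp_risk loss n S) r)"
      "\<forall>r. 0 \<le> r \<and> r \<le> \<rho> \<longrightarrow> flat_min (emp_risk loss n S) r (e j)"
      using flat_minimizer[OF j] by auto
    moreover have "\<rho> *\<^sub>R e N \<in> argmin_on (cball 0 1) (emp_risk loss n S)"
      "\<forall>\<delta>>0. sa_risk (emp_risk loss n S) \<delta> (\<rho> *\<^sub>R e N)
          \<ge> emp_risk loss n S (\<rho> *\<^sub>R e N) + \<delta>\<^sup>2 / 2"
      using sharp_minimizer by auto
    moreover have "pop_risk loss distr (e j) - pop_risk loss distr 0 \<ge> 1/16"
      "pop_risk loss distr (\<rho> *\<^sub>R e N) - pop_risk loss distr 0 = 0"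
      using pop_risk_loss_e_ge[OF j(1)] e_in_Basis[of N] rho_nonneg by (simp_all add: pop_risk_loss_eq_0)
    ultimately show "S \<in> ?Good"
      using S by blast
  qed
  moreover have "?Good \<in> sets ?P"
    by (rule sets_samples) (rule Collect_restrict)
  moreover have "prob_space ?P"
    by (intro prob_space_PiM prob_space_distr)
  ultimately have "measure ?P ?Uncovered \<le> measure ?P ?Good"
    by (intro finite_measure.finite_measure_mono prob_space.finite_measure)
  moreover have "1/2 \<le> measure ?P ?Uncovered"
    using one_minus_inverse_power_le_half[of N]
    unfolding distr_def prob_uncovered_element by simp
  ultimately show ?thesis
    by linarith
qed

end

theorem mainTheorem1:
  fixes n :: nat and \<rho> :: real
  assumes "n \<ge> 1"
    and "DIM('a::euclidean_space) = 2 ^ n + 1"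
    and "0 \<le> \<rho>" and "\<rho> \<le> 1/2"
  shows "\<exists>(D :: nat set measure) (f :: 'a \<Rightarrow> nat set \<Rightarrow> real) wstar.
    prob_space D \<and>
    (\<forall>w. integrable D (f w)) \<and>
    (\<forall>z\<in>space D.
        (\<forall>w. f w z \<ge> 0) \<and> convex_on UNIV (\<lambda>w. f w z) \<and>
        1-lipschitz_on (cball 0 1) (\<lambda>w. f w z) \<and>
        smooth_fun 1 (\<lambda>w. f w z) \<and> flat_fun (\<lambda>w. f w z) \<rho>) \<and>
    wstar \<in> argmin_on (cball 0 1) (pop_risk f D) \<and>
    measure (PiM {..<n} (\<lambda>_. D))
      {S \<in> space (PiM {..<n} (\<lambda>_. D)).
        \<exists>w1 w2. w1 \<in> argmin_on (cball 0 1) (emp_risk f n S) \<and>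
                w2 \<in> argmin_on (cball 0 1) (emp_risk f n S) \<and>
                (\<forall>r\<ge>0. w1 \<in> argmin_on (cball 0 1) (sa_risk (emp_risk f n S) r)) \<and>
                (\<forall>r. 0 \<le> r \<and> r \<le> \<rho> \<longrightarrow> flat_min (emp_risk f n S) r w1) \<and>
                (\<forall>\<delta>>0. sa_risk (emp_risk f n S) \<delta> w2 \<ge> emp_risk f n S w2 + \<delta>\<^sup>2 / 2) \<and>
                pop_risk f D w1 - pop_risk f D wstar \<ge> 1/16 \<and>
                pop_risk f D w2 - pop_risk f D wstar = 0}
      \<ge> 1/2"
proof -
  have "card {..2 ^ n :: nat} = card (Basis :: 'a set)"
    using assms(2) by simp
  then obtain e :: "nat \<Rightarrow> 'a" where "bij_betw e {..2 ^ n} Basis"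
    using finite_same_card_bij[of "{..2 ^ n :: nat}" "Basis :: 'a set"] by auto
  then interpret sharp_flat_instance n \<rho> e
    using assms by unfold_locales auto
  show ?thesis
    using prob_space_distr integrable_loss loss_regular zero_in_argmin_pop_risk prob_good_samples
    by (intro exI[of _ distr] exI[of _ loss] exI[of _ 0]) blast
qed

end
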